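(* Let $\mathbb{R}^n_s$ be $\mathbb{R}^n$ with a non-degenerate symmetric bilinear form $\langle\cdot,\cdot\rangle$ of signature $(n-s,s)$, let $G\subset\mathrm{Iso}(\mathbb{R}^n_s)$ be a real Zariski-closed subgroup whose centralizer in $\mathrm{Iso}(\mathbb{R}^n_s)$ acts transitively on $\mathbb{R}^n$, and let $\mathfrak{g}$ be its Lie algebra with the symmetric bilinear form $(\cdot,\cdot)$ induced by the orbit metric. Then the commutator subalgebra $[\mathfrak{g},\mathfrak{g}]$ is totally isotropic with respect to $(\cdot,\cdot)$, and the center $\mathfrak{z}(\mathfrak{g})$ is orthogonal to $[\mathfrak{g},\mathfrak{g}]$.
   Context: Elements of $\mathfrak{g}$ are written $(A,v)$ (matrices $\begin{pmatrix}A&v\\0&0\end{pmatrix}$). For fixed $p\in\mathbb{R}^n$, the orbit metric form on $\mathfrak{g}$ is $(X,Y)=\langle A_Xp+v_X,\,A_Yp+v_Y\rangle$ for $X=(A_X,v_X)$, $Y=(A_Y,v_Y)$, i.e. the pullback of $\langle\cdot,\cdot\rangle$ on the orbit $G.p$ via the orbit map; it is invariant: $([X,Y],Z)=-(Y,[X,Z])$ for all $X,Y,Z\in\mathfrak{g}$. The group $G$ (and $\mathfrak{g}$) is 2-step nilpotent. *)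

theory Defs
  imports "HOL-Analysis.Analysis"
begin

text \<open>Affine maps of R^n are pairs (A, v), acting by x |-> A x + v, i.e. the matrix
  [[A, v], [0, 1]].  Elements of the Lie algebra are pairs (A, v) standing for
  the matrix [[A, v], [0, 0]].\<close>

type_synonym 'n aff = "(real^'n^'n) \<times> (real^'n)"

definition aff_apply :: "'n::finite aff \<Rightarrow> real^'n \<Rightarrow> real^'n" where
  "aff_apply g x = fst g *v x + snd g"

definition aff_comp :: "'n::finite aff \<Rightarrow> 'n aff \<Rightarrow> 'n aff" where
  "aff_comp g h = (fst g ** fst h, fst g *v snd h + snd g)"

definition aff_id :: "'n::finite aff" where
  "aff_id = (mat 1, 0)"

definition bform :: "real^'n^'n \<Rightarrow> real^'n \<Rightarrow> real^'n \<Rightarrow> real" where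
  "bform Q x y = x \<bullet> (Q *v y)"

text \<open>Q is non-degenerate symmetric (of some signature (n-s,s)).\<close>
definition nondeg_sym :: "real^'n^'n::finite \<Rightarrow> bool" where
  "nondeg_sym Q \<longleftrightarrow> transpose Q = Q \<and> invertible Q"

definition Iso :: "real^'n^'n \<Rightarrow> 'n::finite aff set" where
  "Iso Q = {g. \<forall>x y. bform Q (fst g *v x) (fst g *v y) = bform Q x y}"

definition is_subgroup :: "'n::finite aff set \<Rightarrow> 'n aff set \<Rightarrow> bool" where
  "is_subgroup G H \<longleftrightarrow> G \<subseteq> H \<and> aff_id \<in> G \<and>
     (\<forall>g\<in>G. \<forall>h\<in>G. aff_comp g h \<in> G) \<and>
     (\<forall>g\<in>G. \<exists>h\<in>G. aff_comp g h = aff_id \<and> aff_comp h g = aff_id)"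

inductive_set poly_funs :: "('n::finite aff \<Rightarrow> real) set" where
  const: "(\<lambda>_. c) \<in> poly_funs"
| coordA: "(\<lambda>g. fst g $ i $ j) \<in> poly_funs"
| coordv: "(\<lambda>g. snd g $ i) \<in> poly_funs"
| add: "f \<in> poly_funs \<Longrightarrow> h \<in> poly_funs \<Longrightarrow> (\<lambda>g. f g + h g) \<in> poly_funs"
| mult: "f \<in> poly_funs \<Longrightarrow> h \<in> poly_funs \<Longrightarrow> (\<lambda>g. f g * h g) \<in> poly_funs"

definition zariski_closed :: "'n::finite aff set \<Rightarrow> bool" where
  "zariski_closed G \<longleftrightarrow> (\<exists>F \<subseteq> poly_funs. G = {g. \<forall>f\<in>F. f g = 0})"

definition centralizer :: "'n::finite aff set \<Rightarrow> 'n aff set \<Rightarrow> 'n aff set" where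
  "centralizer H G = {h \<in> H. \<forall>g\<in>G. aff_comp h g = aff_comp g h}"

definition transitive_on_Rn :: "'n::finite aff set \<Rightarrow> bool" where
  "transitive_on_Rn C \<longleftrightarrow> (\<forall>x y. \<exists>h\<in>C. aff_apply h x = y)"

definition lie_alg :: "'n::finite aff set \<Rightarrow> 'n aff set" where
  "lie_alg G = {X. \<exists>c. (\<forall>t. c t \<in> G) \<and> c 0 = aff_id \<and> (c has_vector_derivative X) (at 0)}"

text \<open>Commutator of [[A,v],[0,0]] and [[B,w],[0,0]].\<close>
definition lie_bracket :: "'n::finite aff \<Rightarrow> 'n aff \<Rightarrow> 'n aff" where
  "lie_bracket X Y = (fst X ** fst Y - fst Y ** fst X, fst X *v snd Y - fst Y *v snd X)"

definition orbit_form :: "real^'n^'n \<Rightarrow> real^'n \<Rightarrow> 'n::finite aff \<Rightarrow> 'n aff \<Rightarrow> real" where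
  "orbit_form Q p X Y = bform Q (fst X *v p + snd X) (fst Y *v p + snd Y)"

definition derived_alg :: "'n::finite aff set \<Rightarrow> 'n aff set" where
  "derived_alg L = span {lie_bracket X Y | X Y. X \<in> L \<and> Y \<in> L}"

definition lie_center :: "'n::finite aff set \<Rightarrow> 'n aff set" where
  "lie_center L = {Z \<in> L. \<forall>X\<in>L. lie_bracket Z X = 0}"

end

theory Submission
  imports Defs
begin

text \<open>Every element X of the Lie algebra is skew-adjoint and commutes with the centralizer C.
  Because C is transitive, commuting with C makes the orbit form (X, Y) independent of the
  base point; polarizing this constant quadratic function of the base point shows that any
  two elements X, Y anticommute as matrices [[A, v], [0, 0]], so [X, Y] = 2XY.  Anticommutation
  of X with [Y, Z] then forces X [Y, Z] = 0, and the same holds for central Z in place of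
  [Y, Z].  Finally ([X, Y], W) = 2 (A_X Y(p), W(p)) = -2 (Y(p), (XW)(p)), which vanishes
  whenever XW = 0 for all X.\<close>

lemma matrix_add_rdistrib: "(A + B) ** C = A ** C + B ** C"
  by (simp add: matrix_matrix_mult_def vec_eq_iff sum.distrib distrib_right)

lemma matrix_diff_ldistrib:
  "(A::real^'n::finite^'m::finite) ** (B - C) = A ** B - A ** (C::real^'k::finite^'n)"
  by (simp add: matrix_matrix_mult_def vec_eq_iff algebra_simps sum_subtractf)

lemma matrix_diff_rdistrib:
  "((A::real^'n::finite^'m::finite) - B) ** (C::real^'k::finite^'n) = A ** C - B ** C"
  by (simp add: matrix_matrix_mult_def vec_eq_iff algebra_simps sum_subtractf)

lemma matrix_vector_mult_minus: "A *v (- x) = - (A *v (x::real^'n::finite))"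
  using matrix_vector_mult_diff_distrib[of A 0 x] by simp

lemma eq_neg_self_imp_zero: "(a::'a::real_vector) = - a \<Longrightarrow> a = 0"
  by (metis scaleR_2 scaleR_eq_0_iff eq_neg_iff_add_eq_0 zero_neq_numeral)

lemma bilinear_bform: "bilinear (bform Q)"
  unfolding bilinear_def bform_def
  by (auto intro!: linearI simp: inner_add_left inner_add_right matrix_vector_right_distrib
      matrix_vector_mult_scaleR)

lemmas bform_simps = bilinear_ladd bilinear_radd bilinear_lmul bilinear_rmul bilinear_lneg
  bilinear_rneg bilinear_lsub bilinear_rsub bilinear_lzero bilinear_rzero

lemma bform_sym: "transpose Q = Q \<Longrightarrow> bform Q x y = bform Q y x"
  unfolding bform_def by (metis dot_lmul_matrix inner_commute transpose_matrix_vector)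

lemma bform_nondeg:
  assumes "invertible Q" "\<And>r. bform Q r z = 0" shows "z = 0"
proof -
  have "(Q *v z) \<bullet> (Q *v z) = 0" using assms(2)[of "Q *v z"] by (simp add: bform_def)
  then show ?thesis using assms(1)
    by (metis inner_eq_zero_iff invertible_def matrix_vector_mul_assoc matrix_vector_mul_lid
        matrix_vector_mult_0_right)
qed

definition skew_adjoint :: "real^'n^'n \<Rightarrow> real^'n^'n::finite \<Rightarrow> bool" where
  "skew_adjoint Q A \<longleftrightarrow> (\<forall>x y. bform Q (A *v x) y = - bform Q x (A *v y))"

text \<open>The matrix identity h X = X h for h = [[H, w], [0, 1]] and X = [[A, v], [0, 0]].\<close>
definition aff_commutes :: "'n::finite aff \<Rightarrow> 'n aff \<Rightarrow> bool" where
  "aff_commutes h X \<longleftrightarrow> fst h ** fst X = fst X ** fst h \<and> fst h *v snd X = fst X *v snd h + snd X"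

definition skew_commutant :: "real^'n^'n \<Rightarrow> 'n::finite aff set \<Rightarrow> 'n aff set" where
  "skew_commutant Q C = {X. skew_adjoint Q (fst X) \<and> (\<forall>h\<in>C. aff_commutes h X)}"

text \<open>The matrix product of [[A, v], [0, 0]] and [[B, w], [0, 0]].\<close>
definition aff_mult :: "'n::finite aff \<Rightarrow> 'n aff \<Rightarrow> 'n aff" where
  "aff_mult X Y = (fst X ** fst Y, fst X *v snd Y)"

text \<open>The velocity at p of the orbit of p in direction X.\<close>
definition lie_apply :: "'n::finite aff \<Rightarrow> real^'n \<Rightarrow> real^'n" where
  "lie_apply X p = fst X *v p + snd X"

lemma orbit_form_lie_apply: "orbit_form Q p X Y = bform Q (lie_apply X p) (lie_apply Y p)"
  by (simp add: orbit_form_def lie_apply_def)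

lemma linear_lie_apply: "linear (\<lambda>X. lie_apply X p)"
  by (intro linearI)
     (simp_all add: lie_apply_def matrix_vector_mult_add_rdistrib scaleR_matrix_vector_assoc
      scaleR_right_distrib)

lemma linear_orbit_form_left: "linear (\<lambda>V. orbit_form Q p V W)"
  by (intro linearI)
     (simp_all add: orbit_form_lie_apply linear_add[OF linear_lie_apply]
      linear_scale[OF linear_lie_apply] bform_simps[OF bilinear_bform])

lemma lie_bracket_aff_mult: "lie_bracket X Y = aff_mult X Y - aff_mult Y X"
  by (simp add: lie_bracket_def aff_mult_def)

lemma aff_mult_assoc: "aff_mult (aff_mult X Y) Z = aff_mult X (aff_mult Y Z)"
  by (simp add: aff_mult_def matrix_mul_assoc matrix_vector_mul_assoc)

lemma lie_apply_aff_mult: "lie_apply (aff_mult X Y) p = fst X *v lie_apply Y p"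
  by (simp add: aff_mult_def lie_apply_def matrix_vector_right_distrib matrix_vector_mul_assoc)

lemma linear_aff_mult: "linear (aff_mult X)"
  by (intro linearI)
     (simp_all add: aff_mult_def matrix_add_ldistrib matrix_vector_right_distrib
      matrix_scalar_ac scalar_matrix_assoc matrix_vector_mult_scaleR)

lemma linear_aff_mult_left: "linear (\<lambda>X. aff_mult X Y)"
  by (intro linearI)
     (simp_all add: aff_mult_def matrix_add_rdistrib scalar_matrix_assoc
      matrix_vector_mult_add_rdistrib scaleR_matrix_vector_assoc)

lemma has_derivative_level_curve:
  assumes "(c has_vector_derivative X) (at 0)" "\<And>t. \<phi> (c t) = k"
    and "(\<phi> has_derivative \<phi>') (at (c 0))"
  shows "\<phi>' X = 0"
proof -
  have "(c has_derivative (\<lambda>t. t *\<^sub>R X)) (at 0)"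
    using assms(1) by (simp add: has_vector_derivative_def)
  from has_derivative_compose[OF this assms(3)]
  have "((\<lambda>t. \<phi> (c t)) has_derivative (\<lambda>t. \<phi>' (t *\<^sub>R X))) (at 0)" .
  moreover have "((\<lambda>t. \<phi> (c t)) has_derivative (\<lambda>t. 0)) (at 0)"
    using assms(2) by simp
  ultimately have "(\<lambda>t. \<phi>' (t *\<^sub>R X)) = (\<lambda>t. 0)"
    by (rule has_derivative_unique)
  from fun_cong[OF this, of 1] show ?thesis by simp
qed

lemma linear_level_curve:
  fixes \<phi> :: "'a::euclidean_space \<Rightarrow> 'b::real_normed_vector"
  assumes "(c has_vector_derivative X) (at 0)" "\<And>t. \<phi> (c t) = k" "linear \<phi>"
  shows "\<phi> X = 0"
  by (rule has_derivative_level_curve[OF assms(1,2) linear_imp_has_derivative[OF assms(3)]])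

lemma lie_alg_skew_adjoint:
  assumes "G \<subseteq> Iso Q" "X \<in> lie_alg G"
  shows "skew_adjoint Q (fst X)"
  unfolding skew_adjoint_def
proof (intro allI)
  fix x y
  obtain c where cG: "\<And>t. c t \<in> G" and c0: "c 0 = aff_id"
    and cX: "(c has_vector_derivative X) (at 0)"
    using assms(2) unfolding lie_alg_def by blast
  have lin: "linear (\<lambda>g::'a aff. fst g *v z)" for z
    by (intro linearI) (simp_all add: matrix_vector_mult_add_rdistrib scaleR_matrix_vector_assoc)
  have "((\<lambda>g. bform Q (fst g *v x) (fst g *v y)) has_derivative
      (\<lambda>g'. bform Q (fst (c 0) *v x) (fst g' *v y) + bform Q (fst g' *v x) (fst (c 0) *v y)))
      (at (c 0))"
    using bounded_bilinear.FDERIV[OF bilinear_bform[unfolded bilinear_conv_bounded_bilinear],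
        OF linear_imp_has_derivative[OF lin] linear_imp_has_derivative[OF lin]] by simp
  from has_derivative_level_curve[OF cX _ this, of "bform Q x y"]
  have "bform Q x (fst X *v y) + bform Q (fst X *v x) y = 0"
    using cG assms(1) c0 by (auto simp: Iso_def aff_id_def)
  then show "bform Q (fst X *v x) y = - bform Q x (fst X *v y)" by simp
qed

text \<open>Differentiating h c(t) = c(t) h, with the constant translation part of h moved to
  the right-hand side so that the differentiated map is linear.\<close>
lemma lie_alg_aff_commutes:
  assumes "\<forall>g\<in>G. aff_comp h g = aff_comp g h" "X \<in> lie_alg G"
  shows "aff_commutes h X"
proof -
  obtain c where cG: "\<And>t. c t \<in> G" and cX: "(c has_vector_derivative X) (at 0)"
    using assms(2) unfolding lie_alg_def by blast
  let ?\<phi> = "\<lambda>g. (fst h ** fst g - fst g ** fst h, fst h *v snd g - fst g *v snd h - snd g)"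
  have lin: "linear ?\<phi>"
    by (intro linearI)
       (simp_all add: matrix_add_ldistrib matrix_add_rdistrib matrix_scalar_ac
        scalar_matrix_assoc scaleR_matrix_vector_assoc matrix_vector_mult_add_rdistrib
        matrix_vector_right_distrib matrix_vector_mult_scaleR scaleR_diff_right)
  have "?\<phi> (c t) = (0, - snd h)" for t
    using assms(1) cG[of t] by (auto simp: aff_comp_def algebra_simps)
  from linear_level_curve[OF cX this lin] have "?\<phi> X = 0" .
  then show ?thesis
    by (simp add: aff_commutes_def prod_eq_iff diff_diff_eq flip: eq_iff_diff_eq_0)
qed

lemma lie_alg_subset_skew_commutant:
  assumes "is_subgroup G (Iso Q)"
  shows "lie_alg G \<subseteq> skew_commutant Q (centralizer (Iso Q) G)"
proof
  fix X assume X: "X \<in> lie_alg G"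
  have "G \<subseteq> Iso Q" using assms by (simp add: is_subgroup_def)
  then have "skew_adjoint Q (fst X)" using X by (rule lie_alg_skew_adjoint)
  moreover have "aff_commutes h X" if "h \<in> centralizer (Iso Q) G" for h
    using that X by (intro lie_alg_aff_commutes) (simp_all add: centralizer_def)
  ultimately show "X \<in> skew_commutant Q (centralizer (Iso Q) G)"
    by (simp add: skew_commutant_def)
qed

lemma skew_adjoint_commutator:
  assumes "skew_adjoint Q A" "skew_adjoint Q B"
  shows "skew_adjoint Q (A ** B - B ** A)"
  using assms
  by (simp add: skew_adjoint_def matrix_vector_mult_diff_rdistrib bform_simps[OF bilinear_bform]
      flip: matrix_vector_mul_assoc)

lemma aff_commutes_lie_bracket:
  assumes X: "aff_commutes h X" and Y: "aff_commutes h Y"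
  shows "aff_commutes h (lie_bracket X Y)"
proof -
  define H A B where "H = fst h" and "A = fst X" and "B = fst Y"
  have HA: "H ** A = A ** H" and HB: "H ** B = B ** H"
    using X Y by (simp_all add: aff_commutes_def H_def A_def B_def)
  then have "H ** (A ** B) = (A ** B) ** H" "H ** (B ** A) = (B ** A) ** H"
    by (metis matrix_mul_assoc)+
  then have mat: "H ** (A ** B - B ** A) = (A ** B - B ** A) ** H"
    by (simp add: matrix_diff_ldistrib matrix_diff_rdistrib)
  have "H *v (A *v snd Y - B *v snd X) = A *v (H *v snd Y) - B *v (H *v snd X)"
    using HA HB by (simp add: matrix_vector_mult_diff_distrib matrix_vector_mul_assoc)
  also have "\<dots> = A *v (B *v snd h + snd Y) - B *v (A *v snd h + snd X)"
    using X Y by (simp add: aff_commutes_def H_def A_def B_def)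
  also have "\<dots> = (A ** B - B ** A) *v snd h + (A *v snd Y - B *v snd X)"
    by (simp add: matrix_vector_right_distrib matrix_vector_mult_diff_rdistrib
        matrix_vector_mul_assoc)
  finally show ?thesis
    using mat by (simp add: aff_commutes_def lie_bracket_def H_def A_def B_def)
qed

lemma skew_commutant_lie_bracket:
  "X \<in> skew_commutant Q C \<Longrightarrow> Y \<in> skew_commutant Q C \<Longrightarrow> lie_bracket X Y \<in> skew_commutant Q C"
  by (auto simp: skew_commutant_def aff_commutes_lie_bracket)
     (simp add: lie_bracket_def skew_adjoint_commutator)

lemma aff_commutes_lie_apply:
  assumes "aff_commutes h X"
  shows "lie_apply X (aff_apply h q) = fst h *v lie_apply X q"
  using assms
  by (simp add: aff_commutes_def lie_apply_def aff_apply_def matrix_vector_right_distrib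
      matrix_vector_mul_assoc add.assoc)

text \<open>Polarization: the constant function is even in r, so its quadratic part
  (A r, B r) and its linear part (A r, w) + (u, B r) vanish separately.\<close>
lemma constant_form_anticommute:
  assumes Q: "nondeg_sym Q" and A: "skew_adjoint Q A" and B: "skew_adjoint Q B"
    and const: "\<And>r. bform Q (A *v r + u) (B *v r + w) = bform Q u w"
  shows "A ** B = - (B ** A)" and "A *v w = - (B *v u)"
proof -
  note simps = bform_simps[OF bilinear_bform]
  have sym: "transpose Q = Q" and inv: "invertible Q" using Q by (auto simp: nondeg_sym_def)
  have quad: "bform Q (A *v r) (B *v r) = 0"
    and lin: "bform Q (A *v r) w + bform Q u (B *v r) = 0" for r
  proof -
    have "bform Q (A *v r) (B *v r) + bform Q (A *v r) w + bform Q u (B *v r) = 0"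
      and "bform Q (A *v r) (B *v r) - bform Q (A *v r) w - bform Q u (B *v r) = 0"
      using const[of r] const[of "- r"]
      by (simp_all add: simps matrix_vector_right_distrib matrix_vector_mult_minus)
    then show "bform Q (A *v r) (B *v r) = 0" "bform Q (A *v r) w + bform Q u (B *v r) = 0"
      by linarith+
  qed
  have flip: "bform Q (C *v x) (D *v y) = - bform Q y (D *v (C *v x))"
    if "skew_adjoint Q D" for C D :: "real^'a^'a" and x y
    using that bform_sym[OF sym, of "C *v x"] by (simp add: skew_adjoint_def)
  have "(A ** B + B ** A) *v q = 0" for q
  proof (rule bform_nondeg[OF inv])
    fix r
    have "bform Q (A *v r) (B *v q) + bform Q (A *v q) (B *v r) = 0"
      using quad[of "r + q"] quad[of r] quad[of q]
      by (simp add: simps matrix_vector_right_distrib)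
    then show "bform Q r ((A ** B + B ** A) *v q) = 0"
      using A flip[OF B, of A q r]
      by (simp add: skew_adjoint_def simps matrix_vector_mult_add_rdistrib
          flip: matrix_vector_mul_assoc)
  qed
  then have "A ** B + B ** A = 0"
    by (simp add: matrix_eq)
  then show "A ** B = - (B ** A)"
    by (simp add: eq_neg_iff_add_eq_0)
  have "A *v w + B *v u = 0"
  proof (rule bform_nondeg[OF inv])
    fix r
    show "bform Q r (A *v w + B *v u) = 0"
      using lin[of r] A B bform_sym[OF sym, of u "B *v r"]
      by (simp add: skew_adjoint_def simps)
  qed
  then show "A *v w = - (B *v u)" by (simp add: eq_neg_iff_add_eq_0)
qed

locale transitive_isometries =
  fixes Q :: "real^'n^'n" and C :: "'n::finite aff set"
  assumes nondeg: "nondeg_sym Q"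
    and C_Iso: "C \<subseteq> Iso Q"
    and C_transitive: "transitive_on_Rn C"
begin

text \<open>Moving the base point 0 to q by some h \<in> C multiplies both arguments by the
  isometry fst h.\<close>
lemma orbit_form_base_point:
  assumes "X \<in> skew_commutant Q C" "Y \<in> skew_commutant Q C"
  shows "orbit_form Q q X Y = orbit_form Q 0 X Y"
proof -
  obtain h where h: "h \<in> C" and q: "aff_apply h 0 = q"
    using C_transitive unfolding transitive_on_Rn_def by blast
  have "aff_commutes h X" "aff_commutes h Y"
    using assms h by (auto simp: skew_commutant_def)
  then have "orbit_form Q q X Y = bform Q (fst h *v lie_apply X 0) (fst h *v lie_apply Y 0)"
    unfolding orbit_form_lie_apply q[symmetric] by (simp add: aff_commutes_lie_apply)
  also have "\<dots> = orbit_form Q 0 X Y"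
    using h C_Iso by (auto simp: Iso_def orbit_form_lie_apply)
  finally show ?thesis .
qed

lemma aff_mult_anticommute:
  assumes X: "X \<in> skew_commutant Q C" and Y: "Y \<in> skew_commutant Q C"
  shows "aff_mult X Y = - aff_mult Y X"
proof -
  have "bform Q (fst X *v r + snd X) (fst Y *v r + snd Y) = bform Q (snd X) (snd Y)" for r
    using orbit_form_base_point[OF X Y, of r] by (simp add: orbit_form_def)
  from constant_form_anticommute[OF nondeg _ _ this] X Y
  show ?thesis by (simp add: skew_commutant_def aff_mult_def)
qed

lemma lie_bracket_eq_double_mult:
  assumes "X \<in> skew_commutant Q C" "Y \<in> skew_commutant Q C"
  shows "lie_bracket X Y = 2 *\<^sub>R aff_mult X Y"
proof -
  have "aff_mult Y X = - aff_mult X Y"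
    using aff_mult_anticommute[OF assms] by (simp add: minus_equation_iff)
  then show ?thesis by (simp add: lie_bracket_aff_mult scaleR_2)
qed

text \<open>With W = [Y, Z] = 2YZ, pairwise anticommutation gives XW = 2XYZ = 2YZX = WX, while
  XW = -WX since W lies in the skew commutant again.\<close>
lemma aff_mult_lie_bracket_eq_0:
  assumes X: "X \<in> skew_commutant Q C" and Y: "Y \<in> skew_commutant Q C"
    and Z: "Z \<in> skew_commutant Q C"
  shows "aff_mult X (lie_bracket Y Z) = 0"
proof -
  define W where "W = lie_bracket Y Z"
  have W: "W \<in> skew_commutant Q C"
    unfolding W_def using Y Z by (rule skew_commutant_lie_bracket)
  have "aff_mult X (aff_mult Y Z) = aff_mult (aff_mult X Y) Z"
    by (simp add: aff_mult_assoc)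
  also have "\<dots> = - aff_mult Y (aff_mult X Z)"
    by (simp add: aff_mult_anticommute[OF X Y] aff_mult_assoc linear_neg[OF linear_aff_mult_left])
  also have "\<dots> = aff_mult (aff_mult Y Z) X"
    by (simp add: aff_mult_anticommute[OF X Z] aff_mult_assoc linear_neg[OF linear_aff_mult])
  finally have "aff_mult X (aff_mult Y Z) = aff_mult (aff_mult Y Z) X" .
  then have "aff_mult X W = aff_mult W X"
    unfolding W_def lie_bracket_eq_double_mult[OF Y Z]
    by (simp add: linear_scale[OF linear_aff_mult] linear_scale[OF linear_aff_mult_left])
  with aff_mult_anticommute[OF X W] have "aff_mult X W = - aff_mult X W"
    by simp
  then show ?thesis
    unfolding W_def by (rule eq_neg_self_imp_zero)
qed

lemma lie_center_annihilated:
  assumes L: "L \<subseteq> skew_commutant Q C" and Z: "Z \<in> lie_center L" and X: "X \<in> L"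
  shows "aff_mult X Z = 0"
proof -
  have "Z \<in> L" and "lie_bracket Z X = 0" using Z X by (auto simp: lie_center_def)
  then have "aff_mult X Z = - aff_mult X Z"
    using aff_mult_anticommute[of X Z] L X by (auto simp: lie_bracket_aff_mult)
  then show ?thesis by (rule eq_neg_self_imp_zero)
qed

lemma derived_alg_annihilated:
  assumes L: "L \<subseteq> skew_commutant Q C" and W: "W \<in> derived_alg L" and X: "X \<in> L"
  shows "aff_mult X W = 0"
proof -
  have "W \<in> {W. aff_mult X W = 0}"
    using W unfolding derived_alg_def
  proof (induction rule: span_induct)
    case base
    show ?case using linear_subspace_kernel[OF linear_aff_mult] by simp
  next
    case (step W)
    then show ?case using L X aff_mult_lie_bracket_eq_0 by blast
  qed
  then show ?thesis by simp
qed

text \<open>Since [X, Y] = 2XY, the vector [X, Y](p) is fst X applied to Y(p), and skewness moves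
  fst X onto W(p), where it gives (XW)(p) = 0.\<close>
lemma orbit_form_derived_annihilated:
  assumes L: "L \<subseteq> skew_commutant Q C" and V: "V \<in> derived_alg L"
    and W: "\<forall>X\<in>L. aff_mult X W = 0"
  shows "orbit_form Q p V W = 0"
proof -
  have "V \<in> {V. orbit_form Q p V W = 0}"
    using V unfolding derived_alg_def
  proof (induction rule: span_induct)
    case base
    show ?case using linear_subspace_kernel[OF linear_orbit_form_left] by simp
  next
    case (step V)
    then obtain X Y where V: "V = lie_bracket X Y" and XY: "X \<in> L" "Y \<in> L" by blast
    have "V = 2 *\<^sub>R aff_mult X Y"
      using L XY unfolding V by (intro lie_bracket_eq_double_mult) auto
    then have "lie_apply V p = 2 *\<^sub>R (fst X *v lie_apply Y p)"
      by (simp add: linear_scale[OF linear_lie_apply] lie_apply_aff_mult)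
    moreover have "skew_adjoint Q (fst X)" using L XY by (auto simp: skew_commutant_def)
    moreover have "fst X *v lie_apply W p = 0"
      using W XY lie_apply_aff_mult[of X W p] by (simp add: lie_apply_def)
    ultimately show ?case
      by (simp add: orbit_form_lie_apply skew_adjoint_def bform_simps[OF bilinear_bform])
  qed
  then show ?thesis by simp
qed

end

theorem lemma4p7:
  fixes Q :: "real^'n^'n" and G :: "'n::finite aff set" and p :: "real^'n"
  assumes "nondeg_sym Q"
    and "is_subgroup G (Iso Q)"
    and "zariski_closed G"
    and "transitive_on_Rn (centralizer (Iso Q) G)"
  shows "(\<forall>X\<in>derived_alg (lie_alg G). \<forall>Y\<in>derived_alg (lie_alg G). orbit_form Q p X Y = 0)
       \<and> (\<forall>Z\<in>lie_center (lie_alg G). \<forall>Y\<in>derived_alg (lie_alg G). orbit_form Q p Z Y = 0)"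
proof -
  interpret transitive_isometries Q "centralizer (Iso Q) G"
    using assms(1,4) by unfold_locales (auto simp: centralizer_def)
  have L: "lie_alg G \<subseteq> skew_commutant Q (centralizer (Iso Q) G)"
    using assms(2) by (rule lie_alg_subset_skew_commutant)
  have sym: "orbit_form Q p Z Y = orbit_form Q p Y Z" for Z Y
    using assms(1) by (simp add: orbit_form_def nondeg_sym_def bform_sym)
  show ?thesis
    using orbit_form_derived_annihilated[OF L] derived_alg_annihilated[OF L]
      lie_center_annihilated[OF L] sym
    by metis
qed

end
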